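(* Let $d\ge3$, $d'=2$ and $\varepsilon,\varepsilon',p>0$. Then there exists a positive harmonic function $h$ on $E=\mathbb{R}^d_\varepsilon\cup\mathbb{R}^2_{\varepsilon'}\cup\{a^*\}$ (harmonic with respect to Brownian motion with varying dimension) such that $h\asymp1$ on $\mathbb{R}^d_\varepsilon$ (i.e. $c\le h\le C$ there for constants $c,C>0$) and $h(x)\asymp1+\log|x|_\rho$ for all $x\in\mathbb{R}^2_{\varepsilon'}$ with $|x|_\rho$ sufficiently large (i.e. there are $R_0,c,C>0$ with $c(1+\log|x|_\rho)\le h(x)\le C(1+\log|x|_\rho)$ for $x\in\mathbb{R}^2_{\varepsilon'}$, $|x|_\rho\ge R_0$).
   Context: $\mathbb{R}^k_r=\{x\in\mathbb{R}^k:|x|>r\}$. $E$ is obtained by placing $\mathbb{R}^d$ and $\mathbb{R}^2$ along complementary coordinates and identifying $\{|x|\le\varepsilon\}\subset\mathbb{R}^d$ and $\{|x|\le\varepsilon'\}\subset\mathbb{R}^2$ with one point $a^*$. $m_p(A)=m^{(d)}(A\cap\mathbb{R}^d)+p\,m^{(2)}(A\cap\mathbb{R}^2)$. Brownian motion with varying dimension is the (unique in law) $m_p$-symmetric diffusion on $E$ whose part processes on $\mathbb{R}^d_\varepsilon$ and $\mathbb{R}^2_{\varepsilon'}$ are Brownian motions killed upon leaving these sets and with no killing at $a^*$; its Dirichlet form on $L^2(E;m_p)$ is $\mathcal{E}(f,g)=\frac12\int_{\mathbb{R}^d_\varepsilon}\nabla f\cdot\nabla g\,dm_p+\frac12\int_{\mathbb{R}^2_{\varepsilon'}}\nabla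 f\cdot\nabla g\,dm_p$ on functions whose restrictions lie in $H^1$ of each part and which are quasi-everywhere equal to their value at $a^*$ on both boundary spheres. "Harmonic" means annihilated by the generator of this process (harmonic on each part and satisfying the gluing condition at $a^*$). $|x|_\rho=|x|-\varepsilon'$ for $x\in\mathbb{R}^2_{\varepsilon'}$. *)

theory Defs
  imports "HOL-Analysis.Analysis"
begin

definition pd :: "('a::euclidean_space \<Rightarrow> real) \<Rightarrow> 'a \<Rightarrow> 'a \<Rightarrow> real" where
  "pd f i x = frechet_derivative f (at x) i"

definition C2_on :: "'a::euclidean_space set \<Rightarrow> ('a \<Rightarrow> real) \<Rightarrow> bool" where
  "C2_on S f \<longleftrightarrow> open S \<and>
     (\<forall>x\<in>S. f differentiable (at x) \<and> (\<forall>i\<in>Basis. (pd f i) differentiable (at x))) \<and>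
     (\<forall>i\<in>Basis. continuous_on S (pd f i)) \<and>
     (\<forall>i\<in>Basis. \<forall>j\<in>Basis. continuous_on S (pd (pd f i) j))"

definition laplacian :: "('a::euclidean_space \<Rightarrow> real) \<Rightarrow> 'a \<Rightarrow> real" where
  "laplacian f x = (\<Sum>i\<in>Basis. pd (pd f i) i x)"

definition harmonic_on :: "'a::euclidean_space set \<Rightarrow> ('a \<Rightarrow> real) \<Rightarrow> bool" where
  "harmonic_on S f \<longleftrightarrow> C2_on S f \<and> (\<forall>x\<in>S. laplacian f x = 0)"

definition grad_dot :: "('a::euclidean_space \<Rightarrow> real) \<Rightarrow> ('a \<Rightarrow> real) \<Rightarrow> 'a \<Rightarrow> real" where
  "grad_dot f g x = (\<Sum>i\<in>Basis. pd f i x * pd g i x)"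

text \<open>Test functions near a*: C^1 on the whole space, compactly supported, and constant on
  a closed ball of radius r (r is chosen larger than the radius of the removed ball).\<close>
definition test_fn :: "real \<Rightarrow> ('a::euclidean_space \<Rightarrow> real) \<Rightarrow> bool" where
  "test_fn r g \<longleftrightarrow>
     (\<forall>x. g differentiable (at x)) \<and> (\<forall>i\<in>Basis. continuous_on UNIV (pd g i)) \<and>
     (\<exists>R. \<forall>x. R \<le> norm x \<longrightarrow> g x = 0) \<and>
     (\<forall>x. norm x \<le> r \<longrightarrow> g x = g 0)"

text \<open>A function on E = R^d_eps \<union> R^2_eps' \<union> {a*} is represented by its restriction hD to
  R^d_eps, its restriction h2 to R^2_eps' and its value a at a*.
  Harmonic for BMVD: harmonic on each part, continuous at a* (boundary values equal a),
  and the gluing (zero total flux) condition at a*, expressed weakly through the Dirichlet form: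
  E(h,g) = 0 for all test functions g that are constant near a*.\<close>
definition bmvd_harmonic ::
  "real \<Rightarrow> real \<Rightarrow> real \<Rightarrow> (real^'d \<Rightarrow> real) \<Rightarrow> (real^2 \<Rightarrow> real) \<Rightarrow> real \<Rightarrow> bool" where
  "bmvd_harmonic \<epsilon> \<epsilon>' p hD h2 a \<longleftrightarrow>
     harmonic_on {x. \<epsilon> < norm x} hD \<and> harmonic_on {x. \<epsilon>' < norm x} h2 \<and>
     (\<forall>y. norm y = \<epsilon> \<longrightarrow> (hD \<longlongrightarrow> a) (at y within {x. \<epsilon> < norm x})) \<and>
     (\<forall>y. norm y = \<epsilon>' \<longrightarrow> (h2 \<longlongrightarrow> a) (at y within {x. \<epsilon>' < norm x})) \<and>
     (\<forall>gd g2 r r'. \<epsilon> < r \<longrightarrow> \<epsilon>' < r' \<longrightarrow> test_fn r gd \<longrightarrow> test_fn r' g2 \<longrightarrow> gd 0 = g2 0 \<longrightarrow>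
        integral {x. \<epsilon> < norm x} (grad_dot hD gd)
          + p * integral {x. \<epsilon>' < norm x} (grad_dot h2 g2) = 0)"

end

theory Submission
  imports Defs
begin

text \<open>On the \<open>d\<close>-dimensional part take \<open>h = a - \<beta> (|x|\<^sup>2\<^sup>-\<^sup>d - \<epsilon>\<^sup>2\<^sup>-\<^sup>d)\<close>, bounded because \<open>d \<ge> 3\<close>;
  on the plane take \<open>h = a + ln (|x| / \<epsilon>')\<close>, which grows like \<open>1 + ln |x|\<^sub>\<rho>\<close>. Both are radial and
  harmonic and take the value \<open>a\<close> at \<open>a*\<close>. For \<open>f\<close> harmonic outside a ball, integration by parts
  shows that \<open>\<integral> \<nabla>f \<cdot> \<nabla>g\<close> over the exterior only depends on the value of a test function \<open>g\<close>
  near the hole: it equals \<open>g(0) J\<close> for a flux constant \<open>J\<close>, and \<open>J > 0\<close> when \<open>f\<close> is radially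
  decreasing (test against a radial cutoff). The gluing condition at \<open>a*\<close> is then a single linear
  equation for \<open>\<beta>\<close>, solvable because the flux of \<open>|x|\<^sup>2\<^sup>-\<^sup>d\<close> does not vanish.\<close>

section \<open>Integrals of compactly supported functions\<close>

lemma norm_gt_if_notin_cbox:
  fixes x :: "'a::euclidean_space"
  assumes "x \<notin> cbox (-(R *\<^sub>R One)) (R *\<^sub>R One)"
  shows "R < norm x"
proof -
  from assms obtain i where i: "i \<in> Basis" and "\<not> (-R \<le> x \<bullet> i \<and> x \<bullet> i \<le> R)"
    by (auto simp: mem_box)
  then have "R < \<bar>x \<bullet> i\<bar>" by auto
  also have "\<bar>x \<bullet> i\<bar> \<le> norm x" using i by (rule Basis_le_norm)
  finally show ?thesis .
qed

lemma has_integral_compact_support: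
  fixes f :: "'a::euclidean_space \<Rightarrow> real"
  assumes "continuous_on UNIV f" and "\<And>x. R \<le> norm x \<Longrightarrow> f x = 0"
  shows "(f has_integral integral UNIV f) UNIV"
proof -
  let ?B = "cbox (-(R *\<^sub>R One)) (R *\<^sub>R One) :: 'a set"
  have "(f has_integral integral ?B f) ?B"
    by (intro integrable_integral integrable_continuous continuous_on_subset[OF assms(1)]) auto
  then have "(f has_integral integral ?B f) UNIV"
    by (rule has_integral_on_superset) (use norm_gt_if_notin_cbox assms(2) in force)+
  then show ?thesis by (simp add: integral_unique)
qed

lemma has_integral_translate_compact_support:
  fixes f :: "'a::euclidean_space \<Rightarrow> real"
  assumes cont: "continuous_on UNIV f" and supp: "\<And>x. R \<le> norm x \<Longrightarrow> f x = 0"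
  shows "((\<lambda>x. f (x + c)) has_integral integral UNIV f) UNIV"
proof -
  let ?B = "cbox (-(R *\<^sub>R One)) (R *\<^sub>R One) :: 'a set"
  have "(f has_integral integral UNIV f) ?B"
  proof -
    have "((\<lambda>x. if x \<in> ?B then f x else 0) has_integral integral UNIV f) UNIV"
      using has_integral_compact_support[OF assms] supp norm_gt_if_notin_cbox
      by (smt (verit, ccfv_SIG) has_integral_cong)
    then show ?thesis by (simp add: has_integral_restrict_UNIV)
  qed
  then have "((f \<circ> (+) c) has_integral integral UNIV f) (cbox (-(R *\<^sub>R One) - c) (R *\<^sub>R One - c))"
    by (simp add: has_integral_shift_cbox_iff)
  then have "((f \<circ> (+) c) has_integral integral UNIV f) UNIV"
  proof (rule has_integral_on_superset)
    fix x assume x: "x \<notin> cbox (-(R *\<^sub>R One) - c) (R *\<^sub>R One - c)"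
    have "c + x \<notin> ?B"
    proof
      assume "c + x \<in> ?B"
      then have "x \<in> cbox (-(R *\<^sub>R One) - c) (R *\<^sub>R One - c)"
        by (force simp: mem_box inner_diff_left inner_add_left)
      with x show False ..
    qed
    then show "(f \<circ> (+) c) x = 0" using norm_gt_if_notin_cbox supp by force
  qed simp
  then show ?thesis by (simp add: o_def add.commute)
qed

lemma has_derivative_locally_constant:
  fixes g :: "'a::euclidean_space \<Rightarrow> real"
  assumes "open U" "x \<in> U" "\<And>y. y \<in> U \<Longrightarrow> g y = c"
  shows "(g has_derivative (\<lambda>_. 0)) (at x)"
proof -
  have "((\<lambda>_. c) has_derivative (\<lambda>_. 0)) (at x)" by simp
  then show ?thesis
    by (rule has_derivative_transform_within_open[OF _ assms(1,2)]) (use assms(3) in auto)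
qed

lemma pd_locally_constant:
  fixes g :: "'a::euclidean_space \<Rightarrow> real"
  assumes "open U" "x \<in> U" "\<And>y. y \<in> U \<Longrightarrow> g y = c"
  shows "pd g i x = 0"
proof -
  have "frechet_derivative g (at x) = (\<lambda>_. 0)"
    using frechet_derivative_at[OF has_derivative_locally_constant[OF assms]] by simp
  then show ?thesis by (simp add: pd_def)
qed

lemma open_norm_gt: "open {x::'a::real_normed_vector. e < norm x}"
  by (intro open_Collect_less continuous_intros)

lemma open_norm_lt: "open {x::'a::real_normed_vector. norm x < e}"
  by (intro open_Collect_less continuous_intros)

lemma has_real_derivative_pd_line:
  fixes F :: "'a::euclidean_space \<Rightarrow> real"
  assumes "\<And>x. F differentiable at x"
  shows "((\<lambda>u. F (x + u *\<^sub>R i)) has_real_derivative pd F i (x + u *\<^sub>R i)) (at u)"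
proof -
  let ?y = "x + u *\<^sub>R i"
  have F': "(F has_derivative frechet_derivative F (at ?y)) (at ?y)"
    using assms frechet_derivative_works by blast
  have "((\<lambda>u. x + u *\<^sub>R i) has_derivative (\<lambda>h. h *\<^sub>R i)) (at u)"
    by (auto intro!: derivative_eq_intros)
  from has_derivative_compose[OF this F']
  have "((\<lambda>u. F (x + u *\<^sub>R i)) has_derivative (\<lambda>h. frechet_derivative F (at ?y) (h *\<^sub>R i))) (at u)" .
  moreover have "(\<lambda>h. frechet_derivative F (at ?y) (h *\<^sub>R i)) = (*) (pd F i ?y)"
    using linear_scale[OF has_derivative_linear[OF F']] by (auto simp: pd_def)
  ultimately show ?thesis by (simp add: has_field_derivative_def)
qed

lemma difference_quotient_approx_pd:
  fixes F :: "'a::euclidean_space \<Rightarrow> real"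
  assumes i: "i \<in> Basis" and diff: "\<And>x. F differentiable at x"
    and cont: "continuous_on UNIV (pd F i)" and supp: "\<And>x. R \<le> norm x \<Longrightarrow> F x = 0"
    and e: "0 < e"
  obtains t where "0 < t" "t \<le> 1/2" "\<And>x. \<bar>F (x + t *\<^sub>R i) - F x - t * pd F i x\<bar> \<le> t * e"
proof -
  let ?G = "pd F i"
  let ?K = "cball (0::'a) (R + 1)"
  have "uniformly_continuous_on ?K ?G"
    by (intro compact_uniformly_continuous continuous_on_subset[OF cont]) auto
  then obtain d where d: "d > 0"
    and dd: "\<And>x y. x \<in> ?K \<Longrightarrow> y \<in> ?K \<Longrightarrow> dist y x < d \<Longrightarrow> dist (?G y) (?G x) < e"
    using e unfolding uniformly_continuous_on_def by metis
  define t where "t = min (d/2) (1/2)"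
  have t: "0 < t" "t < d" "t \<le> 1/2" using d unfolding t_def by auto
  have ni: "norm i = 1" using i by simp
  have "\<bar>F (x + t *\<^sub>R i) - F x - t * ?G x\<bar> \<le> t * e" for x
  proof (cases "norm x \<le> R + 1/2")
    case True
    obtain z where z: "0 < z" "z < t" "F (x + t *\<^sub>R i) - F (x + 0 *\<^sub>R i) = (t - 0) * ?G (x + z *\<^sub>R i)"
      using MVT2[OF t(1), of "\<lambda>u. F (x + u *\<^sub>R i)" "\<lambda>u. ?G (x + u *\<^sub>R i)"]
        has_real_derivative_pd_line[OF diff] by blast
    have "norm (x + z *\<^sub>R i) \<le> norm x + z" using norm_triangle_ineq[of x "z *\<^sub>R i"] ni z by simp
    then have "x + z *\<^sub>R i \<in> ?K" "x \<in> ?K"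
      using True z t unfolding mem_cball_0 by auto
    then have "dist (?G (x + z *\<^sub>R i)) (?G x) < e"
      using z t ni by (intro dd) (auto simp: dist_norm)
    then have "t * \<bar>?G (x + z *\<^sub>R i) - ?G x\<bar> \<le> t * e"
      using t by (intro mult_left_mono) (auto simp: dist_real_def)
    moreover have "F (x + t *\<^sub>R i) - F x - t * ?G x = t * (?G (x + z *\<^sub>R i) - ?G x)"
      using z by (simp add: algebra_simps)
    ultimately show ?thesis using t by (simp add: abs_mult)
  next
    case False
    have "norm x - t \<le> norm (x + t *\<^sub>R i)"
      using norm_triangle_ineq2[of x "- (t *\<^sub>R i)"] ni t by simp
    moreover have "?G x = 0"
      by (rule pd_locally_constant[OF open_norm_gt[of R], where c=0]) (use False t supp in auto)
    ultimately show ?thesis using False t e supp by simp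
  qed
  with t that show ?thesis by blast
qed

lemma has_integral_difference_quotient:
  fixes F :: "'a::euclidean_space \<Rightarrow> real"
  assumes "continuous_on UNIV F" and "\<And>x. R \<le> norm x \<Longrightarrow> F x = 0"
  shows "((\<lambda>x. (F (x + c) - F x) / t) has_integral 0) UNIV"
proof -
  have "((\<lambda>x. (1 / t) * (F (x + c) - F x)) has_integral (1 / t) * (integral UNIV F - integral UNIV F)) UNIV"
    by (intro has_integral_mult_right has_integral_diff has_integral_compact_support[OF assms]
        has_integral_translate_compact_support[OF assms])
  then show ?thesis by simp
qed

lemma integral_pd_compact_support_bound:
  fixes F :: "'a::euclidean_space \<Rightarrow> real"
  assumes i: "i \<in> Basis" and diff: "\<And>x. F differentiable at x"
    and cont: "continuous_on UNIV (pd F i)" and supp: "\<And>x. R \<le> norm x \<Longrightarrow> F x = 0"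
    and e: "0 < e"
  shows "\<bar>integral UNIV (pd F i)\<bar>
    \<le> e * measure lborel (cbox (-((R + 1) *\<^sub>R One)) ((R + 1) *\<^sub>R One) :: 'a set)"
proof -
  let ?G = "pd F i"
  let ?B = "cbox (-((R + 1) *\<^sub>R One)) ((R + 1) *\<^sub>R One) :: 'a set"
  obtain t where t: "0 < t" "t \<le> 1/2"
    and approx: "\<And>x. \<bar>F (x + t *\<^sub>R i) - F x - t * ?G x\<bar> \<le> t * e"
    using difference_quotient_approx_pd[OF i diff cont supp e] by blast
  define D where "D x = (F (x + t *\<^sub>R i) - F x) / t" for x
  have contF: "continuous_on UNIV F"
    using diff differentiable_imp_continuous_within continuous_at_imp_continuous_on by blast
  have "((\<lambda>x. ?G x - D x) has_integral integral UNIV ?G - 0) UNIV"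
    unfolding D_def
    by (intro has_integral_diff has_integral_difference_quotient[OF contF supp]
        has_integral_compact_support[OF cont, where R="R + 1"])
       (use supp in \<open>auto intro: pd_locally_constant[OF open_norm_gt[of R], where c=0]\<close>)
  moreover have "(if x \<in> ?B then ?G x - D x else 0) = ?G x - D x" for x
  proof (cases "x \<in> ?B")
    case False
    then have "R + 1 < norm x" by (rule norm_gt_if_notin_cbox)
    moreover have "norm x - t \<le> norm (x + t *\<^sub>R i)"
      using norm_triangle_ineq2[of x "- (t *\<^sub>R i)"] i t by simp
    moreover have "?G x = 0"
      using calculation(1) supp by (intro pd_locally_constant[OF open_norm_gt[of R], where c=0]) auto
    ultimately show ?thesis using t supp False by (simp add: D_def)
  qed simp
  ultimately have "((\<lambda>x. ?G x - D x) has_integral integral UNIV ?G) ?B"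
    by (simp flip: has_integral_restrict_UNIV[of ?B])
  moreover have "norm (?G x - D x) \<le> e" for x
  proof -
    have "\<bar>?G x - D x\<bar> = \<bar>F (x + t *\<^sub>R i) - F x - t * ?G x\<bar> / t"
      using t by (simp add: D_def field_simps abs_minus_commute)
    also have "\<dots> \<le> e" using approx[of x] t by (simp add: divide_le_eq mult.commute)
    finally show ?thesis by simp
  qed
  ultimately have "norm (integral UNIV ?G) \<le> e * measure lborel ?B"
    using e by (intro has_integral_bound) auto
  then show ?thesis by simp
qed

lemma has_integral_pd_compact_support:
  fixes F :: "'a::euclidean_space \<Rightarrow> real"
  assumes i: "i \<in> Basis" and diff: "\<And>x. F differentiable at x"
    and pd: "\<And>x. pd F i x = G x" and contG: "continuous_on UNIV G"
    and supp: "\<And>x. R \<le> norm x \<Longrightarrow> F x = 0"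
  shows "(G has_integral 0) UNIV"
proof -
  have cont: "continuous_on UNIV (pd F i)" using contG by (rule continuous_on_eq) (simp add: pd)
  define m where "m = measure lborel (cbox (-((R + 1) *\<^sub>R One)) ((R + 1) *\<^sub>R One) :: 'a set)"
  have m: "0 \<le> m" unfolding m_def by simp
  have "\<bar>integral UNIV (pd F i)\<bar> \<le> e" if "e > 0" for e
  proof -
    have "\<bar>integral UNIV (pd F i)\<bar> \<le> (e / (m + 1)) * m"
      using integral_pd_compact_support_bound[OF i diff cont supp, where e="e / (m + 1)"] that m
      unfolding m_def by simp
    also have "\<dots> \<le> e" using that m by (simp add: field_simps)
    finally show ?thesis .
  qed
  then have "integral UNIV (pd F i) = 0" by (metis abs_le_zero_iff field_le_epsilon add_0)
  moreover have "(pd F i has_integral integral UNIV (pd F i)) UNIV"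
    by (rule has_integral_compact_support[OF cont, where R="R + 1"])
       (use supp in \<open>auto intro: pd_locally_constant[OF open_norm_gt[of R], where c=0]\<close>)
  ultimately have "(pd F i has_integral 0) UNIV" by simp
  then show ?thesis by (rule has_integral_eq[rotated]) (simp add: pd)
qed

section \<open>Weak harmonicity and flux\<close>

lemma test_fnD:
  fixes g :: "'a::euclidean_space \<Rightarrow> real"
  assumes "test_fn r g"
  shows "\<And>x. (g has_derivative frechet_derivative g (at x)) (at x)"
    and "\<And>x i. norm x < r \<Longrightarrow> pd g i x = 0"
    and "\<exists>R. (\<forall>x. R \<le> norm x \<longrightarrow> g x = 0) \<and> (\<forall>x i. R < norm x \<longrightarrow> pd g i x = 0)"
    and "\<And>i. i \<in> Basis \<Longrightarrow> continuous_on UNIV (pd g i)"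
proof -
  show "\<And>x. (g has_derivative frechet_derivative g (at x)) (at x)"
    using assms frechet_derivative_works unfolding test_fn_def by blast
  show "pd g i x = 0" if "norm x < r" for x i
    by (rule pd_locally_constant[OF open_norm_lt[of r], where c="g 0"])
       (use that assms in \<open>auto simp: test_fn_def\<close>)
  obtain R where R: "\<forall>x. R \<le> norm x \<longrightarrow> g x = 0" using assms unfolding test_fn_def by blast
  moreover have "\<forall>x i. R < norm x \<longrightarrow> pd g i x = 0"
    using R by (intro allI impI pd_locally_constant[OF open_norm_gt[of R], where c=0]) auto
  ultimately show "\<exists>R. (\<forall>x. R \<le> norm x \<longrightarrow> g x = 0) \<and> (\<forall>x i. R < norm x \<longrightarrow> pd g i x = 0)"
    by blast
  show "\<And>i. i \<in> Basis \<Longrightarrow> continuous_on UNIV (pd g i)" using assms unfolding test_fn_def by blast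
qed

lemma harmonic_onD:
  assumes "harmonic_on S f"
  shows "\<And>i. i \<in> Basis \<Longrightarrow> continuous_on S (pd f i)"
    and "\<And>i j. i \<in> Basis \<Longrightarrow> j \<in> Basis \<Longrightarrow> continuous_on S (pd (pd f i) j)"
    and "\<And>x. x \<in> S \<Longrightarrow> laplacian f x = 0"
    and "\<And>x i. x \<in> S \<Longrightarrow> i \<in> Basis \<Longrightarrow> (pd f i has_derivative frechet_derivative (pd f i) (at x)) (at x)"
  using assms unfolding harmonic_on_def C2_on_def
  by (auto intro: frechet_derivative_works[THEN iffD1])

lemma continuous_on_grad_dot_extension:
  fixes f g :: "'a::euclidean_space \<Rightarrow> real"
  assumes hf: "harmonic_on {x. e < norm x} f" and r: "e < r" and g: "test_fn r g"
  shows "continuous_on UNIV (\<lambda>x. if e < norm x then grad_dot f g x else 0)"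
proof -
  let ?G = "\<lambda>x. if e < norm x then grad_dot f g x else 0"
  have "continuous_on {x. e < norm x} (grad_dot f g)"
    unfolding grad_dot_def
    by (intro continuous_on_sum continuous_on_mult harmonic_onD(1)[OF hf]
        continuous_on_subset[OF test_fnD(4)[OF g]]) auto
  then have "continuous_on {x. e < norm x} ?G"
    by (rule continuous_on_eq) auto
  moreover have "continuous_on {x. norm x < r} ?G"
    by (rule continuous_on_eq[of _ "\<lambda>_. 0"]) (auto simp: grad_dot_def test_fnD(2)[OF g])
  ultimately have "continuous_on ({x. e < norm x} \<union> {x. norm x < r}) ?G"
    by (intro continuous_on_open_Un open_norm_gt open_norm_lt)
  moreover have cover: "{x. e < norm x} \<union> {x. norm x < r} = UNIV" using r by auto
  ultimately show ?thesis by (simp only: cover)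
qed

lemma integrable_grad_dot:
  fixes f g :: "'a::euclidean_space \<Rightarrow> real"
  assumes hf: "harmonic_on {x. e < norm x} f" and r: "e < r" and g: "test_fn r g"
  shows "grad_dot f g integrable_on {x. e < norm x}"
proof -
  obtain R where R: "\<forall>x i. R < norm x \<longrightarrow> pd g i x = 0" using test_fnD(3)[OF g] by blast
  have "(\<lambda>x. if e < norm x then grad_dot f g x else 0) integrable_on UNIV"
    by (rule has_integral_integrable[OF has_integral_compact_support[OF
          continuous_on_grad_dot_extension[OF assms], where R="R + 1"]])
       (use R in \<open>auto simp: grad_dot_def\<close>)
  then show ?thesis using integrable_restrict_UNIV[of "{x. e < norm x}" "grad_dot f g"] by simp
qed

lemma pd_mult_test_fn_extension:
  fixes f g :: "'a::euclidean_space \<Rightarrow> real"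
  assumes hf: "harmonic_on {x. e < norm x} f" and r: "e < r" and g: "test_fn r g" and g0: "g 0 = 0"
    and i: "i \<in> Basis"
  shows "(\<lambda>x. if e < norm x then pd f i x * g x else 0) differentiable at x"
    and "pd (\<lambda>x. if e < norm x then pd f i x * g x else 0) i x
      = (if e < norm x then pd f i x * pd g i x + pd (pd f i) i x * g x else 0)"
proof -
  let ?F = "\<lambda>x. if e < norm x then pd f i x * g x else 0"
  let ?Q = "\<lambda>x. if e < norm x then pd f i x * pd g i x + pd (pd f i) i x * g x else 0"
  have gz: "g x = 0" if "norm x \<le> r" for x using g g0 that unfolding test_fn_def by auto
  have "?F differentiable at x \<and> pd ?F i x = ?Q x"
  proof (cases "e < norm x")
    case True
    let ?D = "\<lambda>h. pd f i x * frechet_derivative g (at x) h + frechet_derivative (pd f i) (at x) h * g x"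
    have "((\<lambda>y. pd f i y * g y) has_derivative ?D) (at x)"
      using True by (intro has_derivative_mult harmonic_onD(4)[OF hf _ i] test_fnD(1)[OF g]) auto
    then have D: "(?F has_derivative ?D) (at x)"
      by (rule has_derivative_transform_within_open[OF _ open_norm_gt]) (use True in auto)
    then show ?thesis
      using True frechet_derivative_at[OF D, symmetric] by (auto intro: differentiableI simp: pd_def)
  next
    case False
    with r have x: "norm x < r" by simp
    have D: "(?F has_derivative (\<lambda>_. 0)) (at x)"
      by (rule has_derivative_locally_constant[OF open_norm_lt[of r], where c=0]) (use x gz in auto)
    then show ?thesis
      using x frechet_derivative_at[OF D, symmetric] gz test_fnD(2)[OF g]
      by (auto intro: differentiableI simp: pd_def)
  qed
  then show "?F differentiable at x" "pd ?F i x = ?Q x" by auto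
qed

text \<open>Integration by parts in the \<open>i\<close>-th coordinate: \<open>pd f i * g\<close>, extended by zero into the hole,
  is a compactly supported \<open>C\<^sup>1\<close> function since \<open>g\<close> vanishes near the hole.\<close>
lemma has_integral_pd_mult_test_fn:
  fixes f g :: "'a::euclidean_space \<Rightarrow> real"
  assumes hf: "harmonic_on {x. e < norm x} f" and r: "e < r" and g: "test_fn r g" and g0: "g 0 = 0"
    and i: "i \<in> Basis"
  shows "((\<lambda>x. if e < norm x then pd f i x * pd g i x + pd (pd f i) i x * g x else 0)
    has_integral 0) UNIV"
proof -
  let ?Q = "\<lambda>x. if e < norm x then pd f i x * pd g i x + pd (pd f i) i x * g x else 0"
  have gz: "g x = 0" if "norm x \<le> r" for x using g g0 that unfolding test_fn_def by auto
  obtain R where R: "\<forall>x. R \<le> norm x \<longrightarrow> g x = 0" using test_fnD(3)[OF g] by blast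
  have "continuous_on {x. e < norm x} (\<lambda>x. pd f i x * pd g i x + pd (pd f i) i x * g x)"
  proof -
    have "continuous_on UNIV g"
      using test_fnD(1)[OF g] has_derivative_continuous continuous_at_imp_continuous_on by blast
    then have "continuous_on {x. e < norm x} g" "continuous_on {x. e < norm x} (pd g i)"
      using continuous_on_subset test_fnD(4)[OF g i] by blast+
    then show ?thesis
      by (intro continuous_intros harmonic_onD(1)[OF hf i] harmonic_onD(2)[OF hf i i])
  qed
  then have "continuous_on {x. e < norm x} ?Q" by (rule continuous_on_eq) auto
  moreover have "continuous_on {x. norm x < r} ?Q"
    by (rule continuous_on_eq[of _ "\<lambda>_. 0"]) (auto simp: gz test_fnD(2)[OF g])
  ultimately have "continuous_on ({x. e < norm x} \<union> {x. norm x < r}) ?Q"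
    by (intro continuous_on_open_Un open_norm_gt open_norm_lt)
  moreover have cover: "{x. e < norm x} \<union> {x. norm x < r} = UNIV" using r by auto
  ultimately have contQ: "continuous_on UNIV ?Q" by (simp only: cover)
  show ?thesis
    by (rule has_integral_pd_compact_support[where G="?Q", OF i
          pd_mult_test_fn_extension[OF assms] contQ])
       (use R in auto)
qed

lemma integral_grad_dot_test_fn_eq_0:
  fixes f g :: "'a::euclidean_space \<Rightarrow> real"
  assumes hf: "harmonic_on {x. e < norm x} f" and r: "e < r" and g: "test_fn r g" and g0: "g 0 = 0"
  shows "integral {x. e < norm x} (grad_dot f g) = 0"
proof -
  have "((\<lambda>x. \<Sum>i\<in>Basis. if e < norm x then pd f i x * pd g i x + pd (pd f i) i x * g x else 0)
    has_integral (\<Sum>i\<in>(Basis::'a set). 0)) UNIV"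
    by (intro has_integral_sum has_integral_pd_mult_test_fn[OF assms]) auto
  moreover have "(\<Sum>i\<in>Basis. if e < norm x then pd f i x * pd g i x + pd (pd f i) i x * g x else 0)
      = (if x \<in> {x. e < norm x} then grad_dot f g x else 0)" for x
    using harmonic_onD(3)[OF hf, of x]
    by (simp add: grad_dot_def laplacian_def sum.distrib flip: sum_distrib_right)
  ultimately have "((\<lambda>x. if x \<in> {x. e < norm x} then grad_dot f g x else 0) has_integral 0) UNIV"
    by simp
  then show ?thesis unfolding has_integral_restrict_UNIV by (rule integral_unique)
qed

text \<open>\<open>J\<close> is the weak form of \<open>-\<integral>\<^sub>|\<^sub>x\<^sub>|\<^sub>=\<^sub>e \<partial>f/\<partial>r d\<sigma>\<close>, the flux of \<open>f\<close> into the hole.\<close>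
definition has_flux :: "real \<Rightarrow> ('a::euclidean_space \<Rightarrow> real) \<Rightarrow> real \<Rightarrow> bool" where
  "has_flux e f J \<longleftrightarrow>
     (\<forall>g r. e < r \<longrightarrow> test_fn r g \<longrightarrow> integral {x. e < norm x} (grad_dot f g) = g 0 * J)"

lemma has_flux_integral_grad_dot:
  fixes f g0 :: "'a::euclidean_space \<Rightarrow> real"
  assumes hf: "harmonic_on {x. e < norm x} f"
    and r0: "e < r0" and g0: "test_fn r0 g0" and g00: "g0 0 = 1"
  shows "has_flux e f (integral {x. e < norm x} (grad_dot f g0))"
  unfolding has_flux_def
proof (intro allI impI)
  fix g :: "'a \<Rightarrow> real" and r
  assume r: "e < r" and g: "test_fn r g"
  let ?S = "{x::'a. e < norm x}"
  define h where "h x = g x - g 0 * g0 x" for x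
  have hder: "(h has_derivative (\<lambda>v. frechet_derivative g (at x) v - g 0 * frechet_derivative g0 (at x) v)) (at x)" for x
    unfolding h_def by (intro has_derivative_diff has_derivative_mult_right test_fnD(1)[OF g] test_fnD(1)[OF g0])
  have pdh: "pd h i x = pd g i x - g 0 * pd g0 i x" for i x
    unfolding pd_def using frechet_derivative_at[OF hder[of x], symmetric] by simp
  obtain R1 where R1: "\<forall>x. R1 \<le> norm x \<longrightarrow> g x = 0" using g unfolding test_fn_def by blast
  obtain R2 where R2: "\<forall>x. R2 \<le> norm x \<longrightarrow> g0 x = 0" using g0 unfolding test_fn_def by blast
  have "test_fn (min r r0) h"
    unfolding test_fn_def
  proof (intro conjI allI ballI impI)
    show "h differentiable at x" for x using hder[of x] by (rule differentiableI)
    show "continuous_on UNIV (pd h i)" if "i \<in> Basis" for i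
      unfolding pdh[abs_def] by (intro continuous_intros test_fnD(4)[OF g that] test_fnD(4)[OF g0 that])
    show "\<exists>R. \<forall>x. R \<le> norm x \<longrightarrow> h x = 0"
      by (rule exI[of _ "max R1 R2"]) (use R1 R2 in \<open>auto simp: h_def\<close>)
    show "h x = h 0" if "norm x \<le> min r r0" for x
      using that g g0 g00 unfolding test_fn_def h_def by auto
  qed
  moreover have "h 0 = 0" unfolding h_def using g00 by simp
  ultimately have "integral ?S (grad_dot f h) = 0"
    using r r0 by (intro integral_grad_dot_test_fn_eq_0[OF hf, of "min r r0"]) auto
  moreover have "grad_dot f h = (\<lambda>x. grad_dot f g x - g 0 * grad_dot f g0 x)"
    unfolding grad_dot_def pdh by (simp add: algebra_simps sum_subtractf sum_distrib_left fun_eq_iff)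
  moreover have "integral ?S (\<lambda>x. grad_dot f g x - g 0 * grad_dot f g0 x)
      = integral ?S (grad_dot f g) - g 0 * integral ?S (grad_dot f g0)"
    using integral_diff[OF integrable_grad_dot[OF hf r g]
        integrable_on_cmult_left[OF integrable_grad_dot[OF hf r0 g0]]]
    by simp
  ultimately show "integral ?S (grad_dot f g) = g 0 * integral ?S (grad_dot f g0)" by simp
qed

lemma has_flux_scale:
  assumes "has_flux e f J" and "\<And>x i. e < norm x \<Longrightarrow> pd h i x = c * pd f i x"
  shows "has_flux e h (c * J)"
  unfolding has_flux_def
proof (intro allI impI)
  fix g :: "'a \<Rightarrow> real" and r
  assume "e < r" "test_fn r g"
  have "integral {x. e < norm x} (grad_dot h g) = integral {x. e < norm x} (\<lambda>x. c * grad_dot f g x)"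
    by (rule integral_cong) (simp add: grad_dot_def assms(2) sum_distrib_left mult.assoc)
  also have "\<dots> = c * (g 0 * J)"
    using assms(1) \<open>e < r\<close> \<open>test_fn r g\<close> unfolding has_flux_def by simp
  finally show "integral {x. e < norm x} (grad_dot h g) = g 0 * (c * J)" by simp
qed

section \<open>Radial harmonic functions\<close>

lemma has_derivative_radial:
  fixes x :: "'a::euclidean_space"
  assumes "(\<phi> has_real_derivative d) (at (x \<bullet> x))"
  shows "((\<lambda>y. \<phi> (y \<bullet> y)) has_derivative (\<lambda>h. d * (2 * (x \<bullet> h)))) (at x)"
proof -
  have "((\<lambda>y. y \<bullet> y) has_derivative (\<lambda>h. h \<bullet> x + x \<bullet> h)) (at x)"
    by (auto intro!: derivative_eq_intros)
  from has_derivative_compose[OF this assms[unfolded has_field_derivative_def]]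
  show ?thesis by (simp add: inner_commute algebra_simps)
qed

lemma pd_radial:
  fixes x :: "'a::euclidean_space"
  assumes "(\<phi> has_real_derivative d) (at (x \<bullet> x))"
  shows "pd (\<lambda>y. \<phi> (y \<bullet> y)) i x = 2 * d * (x \<bullet> i)"
  using frechet_derivative_at[OF has_derivative_radial[OF assms], symmetric] by (simp add: pd_def)

lemma norm_gt_iff_inner_self:
  fixes x :: "'a::euclidean_space"
  assumes "0 \<le> e"
  shows "e < norm x \<longleftrightarrow> e\<^sup>2 < x \<bullet> x"
proof -
  have "e < norm x \<longleftrightarrow> e\<^sup>2 < (norm x)\<^sup>2"
    using assms power_less_imp_less_base[of e 2 "norm x"] by (auto intro: power_strict_mono)
  then show ?thesis by (simp add: dot_square_norm)
qed

lemma grad_dot_radial: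
  fixes x :: "'a::euclidean_space"
  assumes "(\<phi> has_real_derivative d) (at (x \<bullet> x))" and "(\<psi> has_real_derivative d') (at (x \<bullet> x))"
  shows "grad_dot (\<lambda>y. \<phi> (y \<bullet> y)) (\<lambda>y. \<psi> (y \<bullet> y)) x = 4 * d * d' * (x \<bullet> x)"
proof -
  have "grad_dot (\<lambda>y. \<phi> (y \<bullet> y)) (\<lambda>y. \<psi> (y \<bullet> y)) x = (\<Sum>i\<in>Basis. 4 * d * d' * ((x \<bullet> i) * (x \<bullet> i)))"
    unfolding grad_dot_def by (intro sum.cong) (auto simp: pd_radial[OF assms(1)] pd_radial[OF assms(2)])
  then show ?thesis by (simp add: euclidean_inner[of x x] flip: sum_distrib_left)
qed

lemma has_flux_radial_scale:
  fixes \<phi> \<psi> \<phi>' :: "real \<Rightarrow> real"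
  assumes J: "has_flux e (\<lambda>x::'a::euclidean_space. \<phi> (x \<bullet> x)) J" and e: "0 \<le> e"
    and d\<phi>: "\<And>s. e\<^sup>2 < s \<Longrightarrow> (\<phi> has_real_derivative \<phi>' s) (at s)"
    and d\<psi>: "\<And>s. e\<^sup>2 < s \<Longrightarrow> (\<psi> has_real_derivative c * \<phi>' s) (at s)"
  shows "has_flux e (\<lambda>x::'a. \<psi> (x \<bullet> x)) (c * J)"
proof (rule has_flux_scale[OF J])
  fix x :: 'a and i assume "e < norm x"
  then have "e\<^sup>2 < x \<bullet> x" by (simp add: norm_gt_iff_inner_self[OF e])
  then show "pd (\<lambda>x. \<psi> (x \<bullet> x)) i x = c * pd (\<lambda>x. \<phi> (x \<bullet> x)) i x"
    by (simp add: pd_radial[OF d\<phi>] pd_radial[OF d\<psi>])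
qed

lemma pd_pd_radial:
  fixes \<phi> \<phi>1 \<phi>2 :: "real \<Rightarrow> real" and x :: "'a::euclidean_space"
  assumes e: "0 \<le> e"
    and d1: "\<And>s. e\<^sup>2 < s \<Longrightarrow> (\<phi> has_real_derivative \<phi>1 s) (at s)"
    and d2: "\<And>s. e\<^sup>2 < s \<Longrightarrow> (\<phi>1 has_real_derivative \<phi>2 s) (at s)"
    and x: "e < norm x"
  shows "(pd (\<lambda>x. \<phi> (x \<bullet> x)) i has_derivative
      (\<lambda>h. 4 * \<phi>2 (x \<bullet> x) * (x \<bullet> h) * (x \<bullet> i) + 2 * \<phi>1 (x \<bullet> x) * (h \<bullet> i))) (at x)"
    and "pd (pd (\<lambda>x. \<phi> (x \<bullet> x)) i) j x
      = 4 * \<phi>2 (x \<bullet> x) * (x \<bullet> j) * (x \<bullet> i) + 2 * \<phi>1 (x \<bullet> x) * (j \<bullet> i)"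
proof -
  let ?D = "\<lambda>h. 4 * \<phi>2 (x \<bullet> x) * (x \<bullet> h) * (x \<bullet> i) + 2 * \<phi>1 (x \<bullet> x) * (h \<bullet> i)"
  have inS: "e\<^sup>2 < y \<bullet> y" if "e < norm y" for y :: 'a using that by (simp add: norm_gt_iff_inner_self[OF e])
  have "((\<lambda>y. 2 * \<phi>1 (y \<bullet> y) * (y \<bullet> i)) has_derivative ?D) (at x)"
    using has_derivative_radial[OF d2[OF inS[OF x]]]
    by (auto intro!: derivative_eq_intros simp: algebra_simps)
  then show D: "(pd (\<lambda>x. \<phi> (x \<bullet> x)) i has_derivative ?D) (at x)"
    by (rule has_derivative_transform_within_open[OF _ open_norm_gt[of e]])
       (use x in \<open>auto simp: pd_radial[OF d1[OF inS]]\<close>)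
  have "frechet_derivative (pd (\<lambda>x. \<phi> (x \<bullet> x)) i) (at x) = ?D"
    by (rule frechet_derivative_at[OF D, symmetric])
  then show "pd (pd (\<lambda>x. \<phi> (x \<bullet> x)) i) j x = ?D j" by (subst pd_def) (simp only:)
qed

text \<open>A radial function \<open>\<phi>(|x|\<^sup>2)\<close> has Laplacian \<open>4 s \<phi>''(s) + 2 n \<phi>'(s)\<close> at \<open>s = |x|\<^sup>2\<close>.\<close>
lemma harmonic_on_radial:
  fixes \<phi> \<phi>1 \<phi>2 :: "real \<Rightarrow> real"
  assumes e: "0 \<le> e"
    and d1: "\<And>s. e\<^sup>2 < s \<Longrightarrow> (\<phi> has_real_derivative \<phi>1 s) (at s)"
    and d2: "\<And>s. e\<^sup>2 < s \<Longrightarrow> (\<phi>1 has_real_derivative \<phi>2 s) (at s)"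
    and c2: "continuous_on {e\<^sup>2<..} \<phi>2"
    and lap: "\<And>s. e\<^sup>2 < s \<Longrightarrow> 4 * s * \<phi>2 s + 2 * DIM('a) * \<phi>1 s = 0"
  shows "harmonic_on {x::'a::euclidean_space. e < norm x} (\<lambda>x. \<phi> (x \<bullet> x))"
proof -
  let ?S = "{x::'a. e < norm x}"
  let ?f = "\<lambda>x::'a. \<phi> (x \<bullet> x)"
  have inS: "e\<^sup>2 < x \<bullet> x" if "x \<in> ?S" for x using that norm_gt_iff_inner_self[OF e] by auto
  note pdf = pd_radial[OF d1[OF inS]] and pd2 = pd_pd_radial[OF e d1 d2]
  have img: "(\<lambda>x. x \<bullet> x) ` ?S \<subseteq> {e\<^sup>2<..}"
    unfolding image_subset_iff using inS by simp
  have "continuous_on {e\<^sup>2<..} \<phi>1"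
    using d2 by (intro continuous_at_imp_continuous_on ballI DERIV_isCont) auto
  then have c1S: "continuous_on ?S (\<lambda>x. \<phi>1 (x \<bullet> x))"
    by (rule continuous_on_compose2[OF _ _ img]) (intro continuous_intros)
  have c2S: "continuous_on ?S (\<lambda>x. \<phi>2 (x \<bullet> x))"
    by (rule continuous_on_compose2[OF c2 _ img]) (intro continuous_intros)
  have "C2_on ?S ?f"
    unfolding C2_on_def
  proof (intro conjI ballI)
    show "open ?S" by (rule open_norm_gt)
    show "?f differentiable at x" if "x \<in> ?S" for x
      using has_derivative_radial[OF d1[OF inS[OF that]]] by (rule differentiableI)
    show "pd ?f i differentiable at x" if "x \<in> ?S" for x i
      using pd2(1) that by (auto intro: differentiableI)
    show "continuous_on ?S (pd ?f i)" for i
      by (rule continuous_on_eq[of _ "\<lambda>x. 2 * \<phi>1 (x \<bullet> x) * (x \<bullet> i)"])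
         (auto intro!: continuous_intros c1S simp: pdf)
    show "continuous_on ?S (pd (pd ?f i) j)" for i j
      by (rule continuous_on_eq[of _ "\<lambda>x. 4 * \<phi>2 (x \<bullet> x) * (x \<bullet> j) * (x \<bullet> i) + 2 * \<phi>1 (x \<bullet> x) * (j \<bullet> i)"])
         (auto intro!: continuous_intros c1S c2S simp: pd2(2))
  qed
  moreover have "laplacian ?f x = 0" if "x \<in> ?S" for x
  proof -
    have "laplacian ?f x = (\<Sum>i\<in>Basis. 4 * \<phi>2 (x \<bullet> x) * ((x \<bullet> i) * (x \<bullet> i)) + 2 * \<phi>1 (x \<bullet> x))"
      unfolding laplacian_def using that by (intro sum.cong) (auto simp: pd2(2))
    also have "\<dots> = 4 * \<phi>2 (x \<bullet> x) * (x \<bullet> x) + 2 * DIM('a) * \<phi>1 (x \<bullet> x)"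
      by (simp add: sum.distrib euclidean_inner[of x x] flip: sum_distrib_left)
    also have "\<dots> = 0" using lap[OF inS[OF that]] by (simp add: algebra_simps)
    finally show ?thesis .
  qed
  ultimately show ?thesis unfolding harmonic_on_def by blast
qed

lemma harmonic_on_powr_radial:
  fixes e q A B :: real
  assumes e: "0 < e" and q: "2 * q = 2 - real DIM('a::euclidean_space)"
  shows "harmonic_on {x::'a. e < norm x} (\<lambda>x. A + B * (x \<bullet> x) powr q)"
proof (rule harmonic_on_radial)
  have pos: "0 < s" if "e\<^sup>2 < s" for s using that e by (smt (verit) zero_less_power)
  show "((\<lambda>s. A + B * s powr q) has_real_derivative B * (q * s powr (q - 1))) (at s)"
    and "((\<lambda>s. B * (q * s powr (q - 1))) has_real_derivative B * (q * ((q - 1) * s powr (q - 1 - 1)))) (at s)"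
    if "e\<^sup>2 < s" for s
    using pos[OF that] by (auto intro!: derivative_eq_intros has_real_derivative_powr)
  show "continuous_on {e\<^sup>2<..} (\<lambda>s. B * (q * ((q - 1) * s powr (q - 1 - 1))))"
    using pos by (intro continuous_intros) auto
  show "4 * s * (B * (q * ((q - 1) * s powr (q - 1 - 1)))) + 2 * DIM('a) * (B * (q * s powr (q - 1))) = 0"
    if "e\<^sup>2 < s" for s
  proof -
    have s: "0 < s" using pos[OF that] .
    define P where "P = s powr (q - 1)"
    have "s * s powr (q - 1 - 1) = P"
      using powr_mult_base[OF less_imp_le[OF s], of "q - 1 - 1"] by (simp add: P_def)
    then have 1: "4 * s * (B * (q * ((q - 1) * s powr (q - 1 - 1)))) = 4 * B * q * (q - 1) * P"
      by (metis (no_types, lifting) mult.assoc mult.left_commute)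
    have D: "real DIM('a) = 2 - 2 * q" using q by simp
    have 2: "2 * DIM('a) * (B * (q * s powr (q - 1))) = (4 - 4 * q) * (B * (q * P))"
      unfolding P_def by (simp add: D algebra_simps)
    show ?thesis unfolding 1 2 by (simp add: algebra_simps)
  qed
qed (use e in simp)

lemma harmonic_on_ln_radial:
  fixes e A :: real
  assumes e: "0 < e" and dim: "DIM('a::euclidean_space) = 2"
  shows "harmonic_on {x::'a. e < norm x} (\<lambda>x. A + ln (x \<bullet> x) / 2)"
proof (rule harmonic_on_radial)
  have pos: "0 < s" if "e\<^sup>2 < s" for s using that e by (smt (verit) zero_less_power)
  show "((\<lambda>s. A + ln s / 2) has_real_derivative 1 / (2 * s)) (at s)"
    and "((\<lambda>s. 1 / (2 * s)) has_real_derivative - 1 / (2 * s\<^sup>2)) (at s)"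
    if "e\<^sup>2 < s" for s
    using pos[OF that] by (auto intro!: derivative_eq_intros simp: power2_eq_square field_simps)
  show "continuous_on {e\<^sup>2<..} (\<lambda>s. - 1 / (2 * s\<^sup>2))"
    using pos by (intro continuous_intros) auto
  show "4 * s * (- 1 / (2 * s\<^sup>2)) + 2 * DIM('a) * (1 / (2 * s)) = 0" if "e\<^sup>2 < s" for s
    using pos[OF that] dim by (simp add: power2_eq_square field_simps)
qed (use e in simp)

section \<open>A radial cutoff and the sign of the flux\<close>

lemma has_real_derivative_max_0_sq: "((\<lambda>u::real. (max u 0)\<^sup>2) has_real_derivative 2 * max u 0) (at u)"
proof (cases "u = 0")
  case True
  have "((\<lambda>h::real. max h 0) \<longlongrightarrow> max 0 0) (at 0)" by (intro tendsto_intros)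
  then have "((\<lambda>h::real. max h 0) \<longlongrightarrow> 0) (at 0)" by simp
  then have "((\<lambda>h::real. ((max (0 + h) 0)\<^sup>2 - (max 0 0)\<^sup>2) / h) \<longlongrightarrow> 0) (at 0)"
    by (rule Lim_transform_eventually)
       (auto simp: eventually_at_filter power2_eq_square max_def intro: always_eventually)
  then show ?thesis using True by (simp add: DERIV_def)
next
  case False
  show ?thesis
  proof (cases "u > 0")
    case True
    have "((\<lambda>u::real. u\<^sup>2) has_real_derivative 2 * u) (at u)"
      by (auto intro!: derivative_eq_intros)
    then have "((\<lambda>u::real. (max u 0)\<^sup>2) has_real_derivative 2 * u) (at u)"
      by (rule has_field_derivative_transform_within_open[where S="{0<..}"]) (use True in auto)
    then show ?thesis using True by simp
  next
    case False': False
    have "((\<lambda>u::real. 0) has_real_derivative 0) (at u)" by simp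
    then have "((\<lambda>u::real. (max u 0)\<^sup>2) has_real_derivative 0) (at u)"
      by (rule has_field_derivative_transform_within_open[where S="{..<0}"]) (use False False' in auto)
    then show ?thesis using False' by simp
  qed
qed

text \<open>A \<open>C\<^sup>1\<close> piecewise quadratic step from \<open>1\<close> (for \<open>s \<le> a\<close>) down to \<open>0\<close> (for \<open>s \<ge> b\<close>);
  its derivative is a negative tent over \<open>[a, b]\<close>.\<close>
definition cutoff :: "real \<Rightarrow> real \<Rightarrow> real \<Rightarrow> real" where
  "cutoff a b s = 1 - ((max (s - a) 0)\<^sup>2 - 2 * (max (s - (a + b) / 2) 0)\<^sup>2 + (max (s - b) 0)\<^sup>2)
     / (2 * ((b - a) / 2)\<^sup>2)"

definition cutoff_deriv :: "real \<Rightarrow> real \<Rightarrow> real \<Rightarrow> real" where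
  "cutoff_deriv a b s = - (max (s - a) 0 - 2 * max (s - (a + b) / 2) 0 + max (s - b) 0) / ((b - a) / 2)\<^sup>2"

lemma cutoff_has_real_derivative:
  assumes "a < b"
  shows "(cutoff a b has_real_derivative cutoff_deriv a b s) (at s)"
proof -
  have shift: "((\<lambda>s. (max (s - c) 0)\<^sup>2) has_real_derivative 2 * max (s - c) 0) (at s)" for c
    using DERIV_chain2[OF has_real_derivative_max_0_sq, of "\<lambda>s. s - c" 1 s]
    by (simp add: DERIV_diff[OF DERIV_ident DERIV_const, simplified])
  have "((\<lambda>s. 1 - ((max (s - a) 0)\<^sup>2 - 2 * (max (s - (a + b) / 2) 0)\<^sup>2 + (max (s - b) 0)\<^sup>2)
     / (2 * ((b - a) / 2)\<^sup>2)) has_real_derivative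
     0 - ((2 * max (s - a) 0 - 2 * (2 * max (s - (a + b) / 2) 0)) + 2 * max (s - b) 0)
       / (2 * ((b - a) / 2)\<^sup>2)) (at s)"
    by (intro DERIV_diff DERIV_const DERIV_cdivide DERIV_add DERIV_cmult shift)
  then show ?thesis unfolding cutoff_def[abs_def]
    by (rule DERIV_cong) (use assms in \<open>simp add: cutoff_deriv_def field_simps\<close>)
qed

lemma continuous_on_cutoff_deriv: "a < b \<Longrightarrow> continuous_on UNIV (cutoff_deriv a b)"
  unfolding cutoff_deriv_def[abs_def] by (intro continuous_intros) auto

lemma cutoff_deriv_nonpos:
  assumes "a < b" shows "cutoff_deriv a b s \<le> 0"
proof -
  define m where "m = (a + b) / 2"
  have "a < m" "m < b" "2 * m = a + b" using assms unfolding m_def by auto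
  then have "0 \<le> max (s - a) 0 - 2 * max (s - m) 0 + max (s - b) 0"
    unfolding max_def by auto
  then show ?thesis unfolding cutoff_deriv_def m_def[symmetric]
    using assms by (intro divide_nonpos_pos) auto
qed

lemma cutoff_deriv_midpoint_neg: "a < b \<Longrightarrow> cutoff_deriv a b ((a + b) / 2) < 0"
  unfolding cutoff_deriv_def by (simp add: max_def field_simps)

lemma cutoff_eq_1: "s \<le> a \<Longrightarrow> a < b \<Longrightarrow> cutoff a b s = 1"
  unfolding cutoff_def by (simp add: max_def)

lemma cutoff_eq_0:
  assumes "b \<le> s" "a < b" shows "cutoff a b s = 0"
proof -
  have "max (s - a) 0 = s - a" "max (s - (a + b) / 2) 0 = s - (a + b) / 2" "max (s - b) 0 = s - b"
    using assms by auto
  moreover have "(s - a)\<^sup>2 - 2 * (s - (a + b) / 2)\<^sup>2 + (s - b)\<^sup>2 = 2 * ((b - a) / 2)\<^sup>2"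
    by (simp add: power2_eq_square algebra_simps)
  ultimately show ?thesis using assms unfolding cutoff_def by simp
qed

lemma test_fn_radial_cutoff:
  assumes "0 < a" "a < b"
  shows "test_fn (sqrt a) (\<lambda>x::'a::euclidean_space. cutoff a b (x \<bullet> x))"
proof -
  let ?g = "\<lambda>x::'a. cutoff a b (x \<bullet> x)"
  note D = cutoff_has_real_derivative[OF assms(2)]
  show ?thesis
    unfolding test_fn_def
  proof (intro conjI allI ballI impI)
    show "?g differentiable at x" for x
      using has_derivative_radial[OF D] by (rule differentiableI)
    show "continuous_on UNIV (pd ?g i)" for i
      unfolding pd_radial[OF D, abs_def]
      by (intro continuous_intros continuous_on_compose2[OF continuous_on_cutoff_deriv[OF assms(2)]]) auto
    show "\<exists>R. \<forall>x. R \<le> norm x \<longrightarrow> ?g x = 0"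
    proof (intro exI allI impI)
      fix x :: 'a assume "sqrt b \<le> norm x"
      then have "(sqrt b)\<^sup>2 \<le> (norm x)\<^sup>2" using assms by (intro power_mono) auto
      then have "b \<le> x \<bullet> x" using assms by (simp add: dot_square_norm)
      then show "?g x = 0" using cutoff_eq_0 assms by auto
    qed
    show "?g x = ?g 0" if "norm x \<le> sqrt a" for x
    proof -
      have "(norm x)\<^sup>2 \<le> (sqrt a)\<^sup>2" using that by (intro power_mono) auto
      then have "x \<bullet> x \<le> a" using assms by (simp add: dot_square_norm)
      then show ?thesis using cutoff_eq_1 assms by simp
    qed
  qed
qed

lemma integral_pos_continuous:
  fixes G :: "'a::euclidean_space \<Rightarrow> real"
  assumes c: "continuous_on UNIV G" and int: "G integrable_on UNIV"
    and nn: "\<And>x. 0 \<le> G x" and p: "0 < G x0"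
  shows "0 < integral UNIV G"
proof -
  obtain d where d: "d > 0" and dd: "\<And>y. dist y x0 < d \<Longrightarrow> dist (G y) (G x0) < G x0 / 2"
    using c p unfolding continuous_on_eq_continuous_at[OF open_UNIV] continuous_at_eps_delta
    by (metis UNIV_I half_gt_zero)
  define c where "c = d / (2 * DIM('a))"
  have cpos: "c > 0" unfolding c_def using d by simp
  define B where "B = cbox (x0 - c *\<^sub>R One) (x0 + c *\<^sub>R One)"
  have inB: "G x0 / 2 \<le> G y" if "y \<in> B" for y
  proof -
    have "\<bar>(y - x0) \<bullet> i\<bar> \<le> c" if "i \<in> Basis" for i
      using \<open>y \<in> B\<close> that unfolding B_def mem_box by (auto simp: inner_diff_left inner_add_left abs_le_iff)
    then have "(\<Sum>i\<in>Basis. \<bar>(y - x0) \<bullet> i\<bar>) \<le> DIM('a) * c"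
      using sum_mono[of Basis "\<lambda>i. \<bar>(y - x0) \<bullet> i\<bar>" "\<lambda>_. c"] by simp
    then have "norm (y - x0) < d"
      using norm_le_l1[of "y - x0"] d unfolding c_def by simp
    then have "\<bar>G y - G x0\<bar> < G x0 / 2" using dd by (simp add: dist_norm dist_real_def)
    then show ?thesis by linarith
  qed
  have "measure lborel B > 0" unfolding B_def using cpos
    by (intro content_pos_lt) (auto simp: inner_add_left inner_diff_left)
  have "((\<lambda>y. if y \<in> B then G x0 / 2 else 0) has_integral measure lborel B * (G x0 / 2)) UNIV"
    using has_integral_const[of "G x0 / 2" "x0 - c *\<^sub>R One" "x0 + c *\<^sub>R One"]
    unfolding has_integral_restrict_UNIV B_def by simp
  then have "measure lborel B * (G x0 / 2) \<le> integral UNIV G"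
    by (rule has_integral_le[OF _ integrable_integral[OF int]]) (use inB nn in auto)
  moreover have "measure lborel B * (G x0 / 2) > 0" using \<open>measure lborel B > 0\<close> p by simp
  ultimately show ?thesis by linarith
qed

lemma harmonic_has_flux:
  fixes f :: "'a::euclidean_space \<Rightarrow> real"
  assumes "harmonic_on {x. e < norm x} f" and "0 \<le> e"
  obtains J where "has_flux e f J"
proof
  have "e < sqrt (e\<^sup>2 + 1)" using assms(2) by (simp add: real_less_rsqrt)
  moreover have "test_fn (sqrt (e\<^sup>2 + 1)) (\<lambda>x::'a. cutoff (e\<^sup>2 + 1) (e\<^sup>2 + 2) (x \<bullet> x))"
    by (rule test_fn_radial_cutoff) (auto simp: add_nonneg_pos)
  ultimately show "has_flux e f (integral {x. e < norm x} (grad_dot f (\<lambda>x. cutoff (e\<^sup>2 + 1) (e\<^sup>2 + 2) (x \<bullet> x))))"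
    by (intro has_flux_integral_grad_dot[OF assms(1)]) (auto simp: cutoff_eq_1)
qed

lemma has_flux_radial_decreasing_pos:
  fixes \<phi> \<phi>' :: "real \<Rightarrow> real"
  assumes hf: "harmonic_on {x::'a::euclidean_space. e < norm x} (\<lambda>x. \<phi> (x \<bullet> x))"
    and d: "\<And>s. e\<^sup>2 < s \<Longrightarrow> (\<phi> has_real_derivative \<phi>' s) (at s)"
    and neg: "\<And>s. e\<^sup>2 < s \<Longrightarrow> \<phi>' s < 0" and e: "0 \<le> e"
    and J: "has_flux e (\<lambda>x::'a. \<phi> (x \<bullet> x)) J"
  shows "0 < J"
proof -
  let ?f = "\<lambda>x::'a. \<phi> (x \<bullet> x)"
  define a where "a = e\<^sup>2 + 1"
  define b where "b = e\<^sup>2 + 2"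
  let ?g = "\<lambda>x::'a. cutoff a b (x \<bullet> x)"
  let ?G = "\<lambda>x. if e < norm x then grad_dot ?f ?g x else 0"
  have ab: "0 < a" "a < b" "e\<^sup>2 < a" unfolding a_def b_def by (auto simp: add_nonneg_pos)
  have ra: "e < sqrt a" using ab e by (simp add: real_less_rsqrt)
  have g: "test_fn (sqrt a) ?g" by (rule test_fn_radial_cutoff[OF ab(1,2)])
  have gd: "grad_dot ?f ?g x = 4 * \<phi>' (x \<bullet> x) * cutoff_deriv a b (x \<bullet> x) * (x \<bullet> x)"
    if "e < norm x" for x
    using that by (intro grad_dot_radial d cutoff_has_real_derivative[OF ab(2)])
      (simp add: norm_gt_iff_inner_self[OF e])
  have nn: "0 \<le> ?G x" for x
  proof (cases "e < norm x")
    case True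
    then have "e\<^sup>2 < x \<bullet> x" by (simp add: norm_gt_iff_inner_self[OF e])
    then have "0 \<le> \<phi>' (x \<bullet> x) * cutoff_deriv a b (x \<bullet> x)"
      using neg cutoff_deriv_nonpos[OF ab(2)] by (auto intro: mult_nonpos_nonpos less_imp_le)
    with True show ?thesis by (simp add: gd)
  qed simp
  obtain i0 :: 'a where i0: "i0 \<in> Basis" using nonempty_Basis by blast
  define m where "m = (a + b) / 2"
  have m: "a < m" "e\<^sup>2 < m" using ab unfolding m_def by auto
  define x0 where "x0 = sqrt m *\<^sub>R i0"
  have x0x0: "x0 \<bullet> x0 = m" unfolding x0_def using i0 m ab by simp
  have ex0: "e < norm x0" using x0x0 m by (simp add: norm_gt_iff_inner_self[OF e])
  have "0 < 4 * \<phi>' m * cutoff_deriv a b m * m"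
    using neg[OF m(2)] cutoff_deriv_midpoint_neg[OF ab(2)] m ab unfolding m_def
    by (simp add: mult_neg_neg)
  then have "0 < ?G x0" using gd[OF ex0] ex0 x0x0 by simp
  moreover have "?G integrable_on UNIV"
    using integrable_grad_dot[OF hf ra g]
      integrable_restrict_UNIV[of "{x. e < norm x}" "grad_dot ?f ?g"] by simp
  ultimately have "0 < integral UNIV ?G"
    using integral_pos_continuous[OF continuous_on_grad_dot_extension[OF hf ra g] _ nn] by blast
  also have "integral UNIV ?G = integral {x. e < norm x} (grad_dot ?f ?g)"
    using integral_restrict_UNIV[of "{x. e < norm x}" "grad_dot ?f ?g"] by simp
  also have "\<dots> = J"
    using J ra g cutoff_eq_1[of 0 a b] ab unfolding has_flux_def by simp
  finally show ?thesis .
qed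

section \<open>The glued harmonic function\<close>

lemma has_flux_powr_radial_pos:
  fixes e q :: real
  assumes e: "0 < e" and q: "2 * q = 2 - real DIM('a::euclidean_space)" and qneg: "q < 0"
  obtains J where "0 < J" and "has_flux e (\<lambda>x::'a. (x \<bullet> x) powr q) J"
proof -
  have hf: "harmonic_on {x::'a. e < norm x} (\<lambda>x. (x \<bullet> x) powr q)"
    using harmonic_on_powr_radial[OF e q, of 0 1] by simp
  obtain J where J: "has_flux e (\<lambda>x::'a. (x \<bullet> x) powr q) J"
    by (rule harmonic_has_flux[OF hf less_imp_le[OF e]])
  have pos: "0 < s" if "e\<^sup>2 < s" for s using that e by (smt (verit) zero_less_power)
  have "0 < J"
  proof (rule has_flux_radial_decreasing_pos[where \<phi>="\<lambda>s. s powr q"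
        and \<phi>'="\<lambda>s. q * s powr (q - 1)", OF hf _ _ _ J])
    show "((\<lambda>s. s powr q) has_real_derivative q * s powr (q - 1)) (at s)" if "e\<^sup>2 < s" for s
      using pos[OF that] by (auto intro!: derivative_eq_intros)
    show "q * s powr (q - 1) < 0" if "e\<^sup>2 < s" for s
      using mult_neg_pos[OF qneg, of "s powr (q - 1)"] pos[OF that] by simp
  qed (use e in simp)
  with J that show ?thesis by blast
qed

lemma bmvd_harmonic_radial_pair:
  fixes \<epsilon> \<epsilon>' p q :: real
  assumes q: "2 * q = 2 - real CARD('d)" and qneg: "q < 0" and e: "0 < \<epsilon>" and e': "0 < \<epsilon>'"
  obtains \<beta> where "\<And>a. bmvd_harmonic \<epsilon> \<epsilon>' p
      (\<lambda>x::real^'d. (a + \<beta> * (\<epsilon>\<^sup>2) powr q) + (- \<beta>) * (x \<bullet> x) powr q)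
      (\<lambda>x::real^2. (a - ln \<epsilon>') + ln (x \<bullet> x) / 2) a"
proof -
  let ?SD = "{x::real^'d. \<epsilon> < norm x}"
  let ?S2 = "{x::real^2. \<epsilon>' < norm x}"
  have qdim: "2 * q = 2 - real DIM(real^'d)" using q by simp
  have pos: "0 < s" if "r\<^sup>2 < s" "0 < r" for r s :: real
  proof -
    have "0 < r\<^sup>2" using that(2) by simp
    with that(1) show ?thesis by linarith
  qed
  obtain JD where "0 < JD" and JD: "has_flux \<epsilon> (\<lambda>x::real^'d. (x \<bullet> x) powr q) JD"
    using has_flux_powr_radial_pos[OF e qdim qneg] by blast
  have "harmonic_on ?S2 (\<lambda>x. 0 + ln (x \<bullet> x) / 2)" by (rule harmonic_on_ln_radial[OF e']) simp
  then obtain J2 where J2: "has_flux \<epsilon>' (\<lambda>x::real^2. ln (x \<bullet> x) / 2) J2"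
    using harmonic_has_flux[OF _ less_imp_le[OF e']] by auto
  define \<beta> where "\<beta> = p * J2 / JD"
  show ?thesis
  proof (rule that, unfold bmvd_harmonic_def, intro conjI allI impI)
    fix a
    let ?hD = "\<lambda>x::real^'d. (a + \<beta> * (\<epsilon>\<^sup>2) powr q) + (- \<beta>) * (x \<bullet> x) powr q"
    let ?h2 = "\<lambda>x::real^2. (a - ln \<epsilon>') + ln (x \<bullet> x) / 2"
    show "harmonic_on ?SD ?hD" by (rule harmonic_on_powr_radial[OF e qdim])
    show "harmonic_on ?S2 ?h2" by (rule harmonic_on_ln_radial[OF e']) simp
    show "(?hD \<longlongrightarrow> a) (at y within ?SD)" if "norm y = \<epsilon>" for y
    proof -
      have "y \<bullet> y = \<epsilon>\<^sup>2" using that by (simp add: dot_square_norm)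
      moreover have "(?hD \<longlongrightarrow> ?hD y) (at y within ?SD)"
        using calculation e by (intro tendsto_intros) auto
      ultimately show ?thesis by simp
    qed
    show "(?h2 \<longlongrightarrow> a) (at y within ?S2)" if "norm y = \<epsilon>'" for y
    proof -
      have "y \<bullet> y = \<epsilon>'\<^sup>2" using that by (simp add: dot_square_norm)
      moreover have "(?h2 \<longlongrightarrow> ?h2 y) (at y within ?S2)"
        using calculation e' by (intro tendsto_intros) auto
      ultimately show ?thesis using e' by (simp add: ln_realpow)
    qed
    have "has_flux \<epsilon> ?hD ((- \<beta>) * JD)"
      by (rule has_flux_radial_scale[OF JD less_imp_le[OF e],
            where \<psi>="\<lambda>s. (a + \<beta> * (\<epsilon>\<^sup>2) powr q) + (- \<beta>) * s powr q" and c="- \<beta>"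
            and \<phi>'="\<lambda>s. q * s powr (q - 1)"])
         (use pos[of \<epsilon>] e in \<open>auto intro!: derivative_eq_intros\<close>)
    moreover have "has_flux \<epsilon>' ?h2 (1 * J2)"
      by (rule has_flux_radial_scale[OF J2 less_imp_le[OF e'],
            where \<psi>="\<lambda>s. (a - ln \<epsilon>') + ln s / 2" and c=1 and \<phi>'="\<lambda>s. 1 / (2 * s)"])
         (use pos[of \<epsilon>'] e' in \<open>auto intro!: derivative_eq_intros\<close>)
    moreover fix gd :: "real^'d \<Rightarrow> real" and g2 :: "real^2 \<Rightarrow> real" and r r'
    assume "\<epsilon> < r" "\<epsilon>' < r'" "test_fn r gd" "test_fn r' g2" "gd 0 = g2 0"
    ultimately show "integral ?SD (grad_dot ?hD gd) + p * integral ?S2 (grad_dot ?h2 g2) = 0"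
      using \<open>0 < JD\<close> unfolding has_flux_def \<beta>_def by (simp add: field_simps)
  qed
qed

lemma ln_shift_bounds:
  fixes K e u :: real
  assumes "1 \<le> K" "0 < e" "e \<le> u" "1 \<le> u"
  shows "1 + ln u \<le> K + ln (u + e)" and "K + ln (u + e) \<le> (K + ln 2) * (1 + ln u)"
proof -
  have "ln u \<le> ln (u + e)" using assms by simp
  then show "1 + ln u \<le> K + ln (u + e)" using assms(1) by linarith
  have "ln (u + e) \<le> ln (2 * u)" using assms by simp
  also have "\<dots> = ln 2 + ln u" using assms by (simp add: ln_mult_pos)
  finally have "K + ln (u + e) \<le> (K + ln 2) + ln u" by simp
  also have "\<dots> \<le> (K + ln 2) + (K + ln 2) * ln u"
    using assms by (intro add_left_mono) (simp add: mult_le_cancel_right1 add_increasing2)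
  finally show "K + ln (u + e) \<le> (K + ln 2) * (1 + ln u)" by (simp add: algebra_simps)
qed

lemma ln_radial_comparable:
  fixes e a :: real
  assumes e: "0 < e" and a: "1 + \<bar>ln e\<bar> \<le> a"
  shows "(\<forall>x::'a::euclidean_space. e < norm x \<longrightarrow> 0 < (a - ln e) + ln (x \<bullet> x) / 2) \<and>
    (\<exists>R0 c C. 0 < R0 \<and> 0 < c \<and> 0 < C \<and>
      (\<forall>x::'a. e < norm x \<and> R0 \<le> norm x - e \<longrightarrow>
         c * (1 + ln (norm x - e)) \<le> (a - ln e) + ln (x \<bullet> x) / 2 \<and>
         (a - ln e) + ln (x \<bullet> x) / 2 \<le> C * (1 + ln (norm x - e))))"
proof (intro conjI allI impI exI)
  have ln_norm: "ln (x \<bullet> x) / 2 = ln (norm x)" if "e < norm x" for x :: 'a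
    using e that by (simp add: dot_square_norm ln_realpow)
  show "0 < (a - ln e) + ln (x \<bullet> x) / 2" if "e < norm x" for x :: 'a
  proof -
    have "ln e < ln (norm x)" using e that by (subst ln_less_cancel_iff) auto
    then show ?thesis using a ln_norm[OF that] by linarith
  qed
  show "0 < max 1 e" "(0::real) < 1" "0 < a - ln e + ln 2" using a by (auto simp: abs_le_iff add_pos_nonneg)
  show "1 * (1 + ln (norm x - e)) \<le> (a - ln e) + ln (x \<bullet> x) / 2"
    "(a - ln e) + ln (x \<bullet> x) / 2 \<le> (a - ln e + ln 2) * (1 + ln (norm x - e))"
    if "e < norm x \<and> max 1 e \<le> norm x - e" for x :: 'a
    using ln_shift_bounds[of "a - ln e" e "norm x - e"] a e that ln_norm by auto
qed

lemma powr_radial_comparable: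
  fixes e q \<beta> a :: real
  assumes q: "q < 0" and e: "0 < e" and a: "1 + \<bar>\<beta>\<bar> * (e\<^sup>2) powr q \<le> a"
  shows "(\<forall>x::'a::euclidean_space. e < norm x \<longrightarrow> 0 < (a + \<beta> * (e\<^sup>2) powr q) + (- \<beta>) * (x \<bullet> x) powr q) \<and>
    (\<exists>c C. 0 < c \<and> 0 < C \<and> (\<forall>x::'a. e < norm x \<longrightarrow>
       c \<le> (a + \<beta> * (e\<^sup>2) powr q) + (- \<beta>) * (x \<bullet> x) powr q \<and>
       (a + \<beta> * (e\<^sup>2) powr q) + (- \<beta>) * (x \<bullet> x) powr q \<le> C))"
proof -
  have bounds: "1 \<le> (a + \<beta> * (e\<^sup>2) powr q) + (- \<beta>) * (x \<bullet> x) powr q \<and>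
      (a + \<beta> * (e\<^sup>2) powr q) + (- \<beta>) * (x \<bullet> x) powr q \<le> a + \<bar>\<beta>\<bar> * (e\<^sup>2) powr q"
    if x: "e < norm x" for x :: 'a
  proof -
    have "e\<^sup>2 < x \<bullet> x" using e x by (simp add: norm_gt_iff_inner_self)
    then have "0 < (x \<bullet> x) powr q" "(x \<bullet> x) powr q \<le> (e\<^sup>2) powr q"
      using q e by (auto intro: powr_mono2')
    then have "\<bar>\<beta> * ((e\<^sup>2) powr q - (x \<bullet> x) powr q)\<bar> \<le> \<bar>\<beta>\<bar> * (e\<^sup>2) powr q"
      unfolding abs_mult by (intro mult_left_mono) auto
    moreover have "(a + \<beta> * (e\<^sup>2) powr q) + (- \<beta>) * (x \<bullet> x) powr q
        = a + \<beta> * ((e\<^sup>2) powr q - (x \<bullet> x) powr q)" by (simp add: algebra_simps)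
    ultimately show ?thesis using a by (smt (verit))
  qed
  show ?thesis
  proof (intro conjI allI impI exI)
    show "0 < (a + \<beta> * (e\<^sup>2) powr q) + (- \<beta>) * (x \<bullet> x) powr q" if "e < norm x" for x :: 'a
      using bounds[OF that] by linarith
    show "(0::real) < 1" by simp
    have "0 \<le> \<bar>\<beta>\<bar> * (e\<^sup>2) powr q" by simp
    with a show "0 < a + \<bar>\<beta>\<bar> * (e\<^sup>2) powr q" by linarith
    show "1 \<le> (a + \<beta> * (e\<^sup>2) powr q) + (- \<beta>) * (x \<bullet> x) powr q"
      "(a + \<beta> * (e\<^sup>2) powr q) + (- \<beta>) * (x \<bullet> x) powr q \<le> a + \<bar>\<beta>\<bar> * (e\<^sup>2) powr q"
      if "e < norm x" for x :: 'a
      using bounds[OF that] by auto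
  qed
qed

theorem proposition6p4:
  fixes \<epsilon> \<epsilon>' p :: real
  assumes "CARD('d) \<ge> 3" and "\<epsilon> > 0" and "\<epsilon>' > 0" and "p > 0"
  shows "\<exists>(hD :: real^'d \<Rightarrow> real) (h2 :: real^2 \<Rightarrow> real) a.
     bmvd_harmonic \<epsilon> \<epsilon>' p hD h2 a \<and>
     a > 0 \<and> (\<forall>x. \<epsilon> < norm x \<longrightarrow> hD x > 0) \<and> (\<forall>x. \<epsilon>' < norm x \<longrightarrow> h2 x > 0) \<and>
     (\<exists>c C. 0 < c \<and> 0 < C \<and> (\<forall>x. \<epsilon> < norm x \<longrightarrow> c \<le> hD x \<and> hD x \<le> C)) \<and>
     (\<exists>R0 c C. 0 < R0 \<and> 0 < c \<and> 0 < C \<and>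
        (\<forall>x. \<epsilon>' < norm x \<and> R0 \<le> norm x - \<epsilon>' \<longrightarrow>
           c * (1 + ln (norm x - \<epsilon>')) \<le> h2 x \<and> h2 x \<le> C * (1 + ln (norm x - \<epsilon>'))))"
proof -
  define q where "q = (2 - real CARD('d)) / 2"
  have q: "2 * q = 2 - real CARD('d)" and qneg: "q < 0" using assms(1) unfolding q_def by auto
  obtain \<beta> where harm: "\<And>a. bmvd_harmonic \<epsilon> \<epsilon>' p
      (\<lambda>x::real^'d. (a + \<beta> * (\<epsilon>\<^sup>2) powr q) + (- \<beta>) * (x \<bullet> x) powr q)
      (\<lambda>x::real^2. (a - ln \<epsilon>') + ln (x \<bullet> x) / 2) a"
    using bmvd_harmonic_radial_pair[OF q qneg assms(2,3), where p=p] by blast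
  define a where "a = 1 + \<bar>\<beta>\<bar> * (\<epsilon>\<^sup>2) powr q + \<bar>ln \<epsilon>'\<bar>"
  have aD: "1 + \<bar>\<beta>\<bar> * (\<epsilon>\<^sup>2) powr q \<le> a" and a2: "1 + \<bar>ln \<epsilon>'\<bar> \<le> a"
    unfolding a_def by auto
  have "0 < a" using a2 abs_ge_zero[of "ln \<epsilon>'"] by linarith
  with harm[of a] powr_radial_comparable[OF qneg assms(2) aD]
    ln_radial_comparable[OF assms(3) a2] show ?thesis
    by (intro exI[of _ "\<lambda>x::real^'d. (a + \<beta> * (\<epsilon>\<^sup>2) powr q) + (- \<beta>) * (x \<bullet> x) powr q"]
        exI[of _ "\<lambda>x::real^2. (a - ln \<epsilon>') + ln (x \<bullet> x) / 2"] exI[of _ a]) blast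
qed

end
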